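(* Let $q$ be a prime power and $F/\mathbb{F}_q$ an algebraic function field with full constant field $\mathbb{F}_q$ of genus $g\geq 2$. For $n\geq 0$ let $A_n$ be the number of effective divisors of degree $n$ of $F$, for $r\geq 1$ let $B_r$ be the number of places of degree $r$ of $F$, let $\Sigma_1=\sum_{n=0}^{g-1}A_n$ and $\Delta_1=\{r:1\leq r\leq g-1,\ B_r\geq 1\}$. Then $$\Sigma_1\leq\prod_{r\in\Delta_1}\binom{B_r+\lfloor\frac{g-1}{r}\rfloor}{\lfloor\frac{g-1}{r}\rfloor}.$$ *)

theory Defs
  imports Complex_Main
begin

text \<open>An algebraic function field F/K is modelled as the whole type 'a (a field),
  together with a subfield K (a set of elements of 'a).\<close>

definition subfield_of :: "'a::field set \<Rightarrow> bool" where
  "subfield_of K \<longleftrightarrow> 0 \<in> K \<and> 1 \<in> K \<and>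
     (\<forall>x\<in>K. \<forall>y\<in>K. x + y \<in> K \<and> x * y \<in> K) \<and>
     (\<forall>x\<in>K. - x \<in> K \<and> inverse x \<in> K)"

definition algebraic_over :: "'a::field set \<Rightarrow> 'a \<Rightarrow> bool" where
  "algebraic_over K x \<longleftrightarrow> (\<exists>(c::nat \<Rightarrow> 'a) n. (\<forall>i. c i \<in> K) \<and> (\<exists>i\<le>n. c i \<noteq> 0) \<and>
      (\<Sum>i\<le>n. c i * x ^ i) = 0)"

definition rat_fun_field :: "'a::field set \<Rightarrow> 'a \<Rightarrow> 'a set" where
  "rat_fun_field K x = {(\<Sum>i\<le>n. a i * x ^ i) / (\<Sum>i\<le>n. b i * x ^ i) | n a b.
      (\<forall>i. a i \<in> K \<and> b i \<in> K) \<and> (\<Sum>i\<le>n. b i * x ^ i) \<noteq> 0}"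

definition finite_over :: "'a::field set \<Rightarrow> bool" where
  "finite_over E \<longleftrightarrow> (\<exists>B. finite B \<and>
      (\<forall>y. \<exists>c. (\<forall>b\<in>B. c b \<in> E) \<and> y = (\<Sum>b\<in>B. c b * b)))"

definition function_field :: "'a::field set \<Rightarrow> bool" where
  "function_field K \<longleftrightarrow> subfield_of K \<and>
     (\<exists>x. \<not> algebraic_over K x \<and> finite_over (rat_fun_field K x))"

definition full_constant_field :: "'a::field set \<Rightarrow> bool" where
  "full_constant_field K \<longleftrightarrow> (\<forall>x. algebraic_over K x \<longrightarrow> x \<in> K)"

definition valuation_ring :: "'a::field set \<Rightarrow> 'a set \<Rightarrow> bool" where
  "valuation_ring K V \<longleftrightarrow> K \<subset> V \<and> V \<noteq> UNIV \<and> 0 \<in> V \<and> 1 \<in> V \<and>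
     (\<forall>x\<in>V. \<forall>y\<in>V. x + y \<in> V \<and> x * y \<in> V \<and> - x \<in> V) \<and>
     (\<forall>z. z \<noteq> 0 \<longrightarrow> z \<in> V \<or> inverse z \<in> V)"

definition place :: "'a::field set \<Rightarrow> 'a set \<Rightarrow> bool" where
  "place K P \<longleftrightarrow> (\<exists>V. valuation_ring K V \<and> P = {z \<in> V. z = 0 \<or> inverse z \<notin> V})"

definition val_ring :: "'a::field set \<Rightarrow> 'a set" where
  "val_ring P = {z. \<forall>y\<in>P. z * y \<in> P}"

text \<open>Normalized discrete valuation v_P(z) for z \<noteq> 0: z = t^n u with t a prime
  element of P and u a unit of O_P.\<close>
definition val :: "'a::field set \<Rightarrow> 'a \<Rightarrow> int" where
  "val P z = (THE n::int. \<exists>t u. P = {t * y | y. y \<in> val_ring P} \<and>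
      u \<in> val_ring P \<and> inverse u \<in> val_ring P \<and> z = t powi n * u)"

text \<open>Linear independence over K modulo a set P (P = {0} gives plain independence).\<close>
definition indep_mod :: "'a::field set \<Rightarrow> 'a set \<Rightarrow> 'a set \<Rightarrow> bool" where
  "indep_mod K P S \<longleftrightarrow> (\<forall>c. (\<forall>s\<in>S. c s \<in> K) \<longrightarrow> (\<Sum>s\<in>S. c s * s) \<in> P \<longrightarrow> (\<forall>s\<in>S. c s = 0))"

text \<open>Degree of a place: the K-dimension of the residue class field O_P/P.\<close>
definition deg_place :: "'a::field set \<Rightarrow> 'a set \<Rightarrow> nat" where
  "deg_place K P = (GREATEST d. \<exists>S. finite S \<and> card S = d \<and> S \<subseteq> val_ring P \<and> indep_mod K P S)"

definition is_divisor :: "'a::field set \<Rightarrow> ('a set \<Rightarrow> int) \<Rightarrow> bool" where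
  "is_divisor K D \<longleftrightarrow> finite {P. D P \<noteq> 0} \<and> (\<forall>P. D P \<noteq> 0 \<longrightarrow> place K P)"

definition effective :: "('a set \<Rightarrow> int) \<Rightarrow> bool" where
  "effective D \<longleftrightarrow> (\<forall>P. D P \<ge> 0)"

definition deg_div :: "'a::field set \<Rightarrow> ('a set \<Rightarrow> int) \<Rightarrow> int" where
  "deg_div K D = (\<Sum>P\<in>{P. D P \<noteq> 0}. D P * int (deg_place K P))"

definition RR_space :: "'a::field set \<Rightarrow> ('a set \<Rightarrow> int) \<Rightarrow> 'a set" where
  "RR_space K A = {x. x = 0 \<or> (\<forall>P. place K P \<longrightarrow> val P x \<ge> - A P)}"

definition ell :: "'a::field set \<Rightarrow> ('a set \<Rightarrow> int) \<Rightarrow> nat" where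
  "ell K A = (GREATEST n. \<exists>S. finite S \<and> card S = n \<and> S \<subseteq> RR_space K A \<and> indep_mod K {0} S)"

definition genus :: "'a::field set \<Rightarrow> int" where
  "genus K = (GREATEST g. \<exists>A. is_divisor K A \<and> g = deg_div K A - int (ell K A) + 1)"

definition num_eff_divisors :: "'a::field set \<Rightarrow> nat \<Rightarrow> nat" where
  "num_eff_divisors K n = card {D. is_divisor K D \<and> effective D \<and> deg_div K D = int n}"

definition num_places :: "'a::field set \<Rightarrow> nat \<Rightarrow> nat" where
  "num_places K r = card {P. place K P \<and> deg_place K P = r}"

end

theory Submission
  imports Defs "HOL-Library.Multiset" "HOL-Library.FuncSet"
begin

text \<open>An effective divisor of degree \<open>n \<le> N\<close> is determined by its restrictions to the sets of
  places of each degree \<open>r\<close>. The restriction to degree \<open>r\<close> is a function from the \<open>B\<^sub>r\<close>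
  places of degree \<open>r\<close> to \<open>\<nat>\<close> whose values sum to at most \<open>n div r \<le> N div r\<close>, i.e.\ a
  multiset of size at most \<open>N div r\<close>, and there are \<open>(B\<^sub>r + N div r) choose (N div r)\<close>
  of those. Only degrees \<open>1 \<le> r \<le> N\<close> with \<open>B\<^sub>r \<ge> 1\<close> occur, which gives the product.
  Nothing beyond this combinatorial structure of divisors is used.\<close>

definition bounded_sum_functions :: "'b set \<Rightarrow> nat \<Rightarrow> ('b \<Rightarrow> nat) set" where
  "bounded_sum_functions A k = {f. (\<forall>x. x \<notin> A \<longrightarrow> f x = 0) \<and> sum f A \<le> k}"

lemma card_multisets_of_size_le:
  assumes "finite A"
  shows "card {M. set_mset M \<subseteq> A \<and> size M \<le> k} = (card A + k) choose k"
proof (cases "A = {}")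
  case True
  then have "{M. set_mset M \<subseteq> A \<and> size M \<le> k} = {{#}}" by auto
  then show ?thesis using True by simp
next
  case False
  then obtain c where c: "card A = Suc c" using assms by (cases "card A") auto
  have "{M. set_mset M \<subseteq> A \<and> size M \<le> k} = (\<Union>m\<le>k. multisets_of_size A m)"
    by (auto simp: multisets_of_size_def)
  also have "card \<dots> = (\<Sum>m\<le>k. card (multisets_of_size A m))"
    using assms by (intro card_UN_disjoint) (auto dest: multisets_of_size_size)
  also have "\<dots> = (\<Sum>m\<le>k. (c + m) choose m)"
    using assms c by (simp add: card_multisets_of_size)
  also have "\<dots> = (card A + k) choose k"
    using c by (simp add: sum_choose_lower)
  finally show ?thesis .
qed

lemma bij_betw_count_bounded_sum_functions:
  assumes "finite A"
  shows "bij_betw count {M. set_mset M \<subseteq> A \<and> size M \<le> k} (bounded_sum_functions A k)"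
proof (rule bij_betw_byWitness[where f' = Abs_multiset])
  have size_eq: "size M = sum (count M) A" if "set_mset M \<subseteq> A" for M :: "'a multiset"
    unfolding size_multiset_overloaded_eq using that assms
    by (intro sum.mono_neutral_left) (auto simp: not_in_iff)
  show "count ` {M. set_mset M \<subseteq> A \<and> size M \<le> k} \<subseteq> bounded_sum_functions A k"
  proof (rule image_subsetI)
    fix M assume "M \<in> {M. set_mset M \<subseteq> A \<and> size M \<le> k}"
    then show "count M \<in> bounded_sum_functions A k"
      using size_eq by (auto simp: bounded_sum_functions_def count_eq_zero_iff)
  qed
  have count_Abs: "count (Abs_multiset f) = f" if "f \<in> bounded_sum_functions A k" for f
  proof (rule count_Abs_multiset)
    show "finite {x. 0 < f x}"
      using that by (intro finite_subset[OF _ assms]) (auto simp: bounded_sum_functions_def)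
  qed
  then show "\<forall>f\<in>bounded_sum_functions A k. count (Abs_multiset f) = f"
    by blast
  show "Abs_multiset ` bounded_sum_functions A k \<subseteq> {M. set_mset M \<subseteq> A \<and> size M \<le> k}"
  proof (rule image_subsetI)
    fix f assume f: "f \<in> bounded_sum_functions A k"
    have "set_mset (Abs_multiset f) \<subseteq> A"
      using f count_Abs[OF f] by (auto simp: bounded_sum_functions_def set_mset_def)
    moreover have "size (Abs_multiset f) \<le> k"
      using f count_Abs[OF f] size_eq[OF calculation] by (simp add: bounded_sum_functions_def)
    ultimately show "Abs_multiset f \<in> {M. set_mset M \<subseteq> A \<and> size M \<le> k}"
      by simp
  qed
qed simp

lemma card_bounded_sum_functions:
  assumes "finite A"
  shows "card (bounded_sum_functions A k) = (card A + k) choose k"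
  unfolding bij_betw_same_card[OF bij_betw_count_bounded_sum_functions[OF assms], symmetric]
  by (rule card_multisets_of_size_le[OF assms])

lemma finite_bounded_sum_functions:
  assumes "finite A"
  shows "finite (bounded_sum_functions A k)"
  using card_bounded_sum_functions[OF assms, of k] by (intro card_ge_0_finite) simp

definition effective_divisors :: "('b \<Rightarrow> bool) \<Rightarrow> ('b \<Rightarrow> nat) \<Rightarrow> nat \<Rightarrow> ('b \<Rightarrow> int) set" where
  "effective_divisors pl dg n = {D. finite {P. D P \<noteq> 0} \<and> (\<forall>P. D P \<noteq> 0 \<longrightarrow> pl P) \<and>
     (\<forall>P. 0 \<le> D P) \<and> (\<Sum>P\<in>{P. D P \<noteq> 0}. D P * int (dg P)) = int n}"

lemma effective_divisors_degree:
  assumes "D \<in> effective_divisors pl dg n" "finite T" "{P. D P \<noteq> 0} \<subseteq> T"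
  shows "(\<Sum>P\<in>T. D P * int (dg P)) = int n"
proof -
  have "(\<Sum>P\<in>T. D P * int (dg P)) = (\<Sum>P\<in>{P. D P \<noteq> 0}. D P * int (dg P))"
    using assms(2,3) by (intro sum.mono_neutral_right) auto
  then show ?thesis using assms(1) by (simp add: effective_divisors_def)
qed

lemma mem_effective_divisorsI:
  assumes "finite T" "{P. D P \<noteq> 0} \<subseteq> T" "\<And>P. D P \<noteq> 0 \<Longrightarrow> pl P" "\<And>P. 0 \<le> D P"
    and "(\<Sum>P\<in>T. D P * int (dg P)) = int n"
  shows "D \<in> effective_divisors pl dg n"
proof -
  have "(\<Sum>P\<in>T. D P * int (dg P)) = (\<Sum>P\<in>{P. D P \<noteq> 0}. D P * int (dg P))"
    using assms(1,2) by (intro sum.mono_neutral_right) auto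
  then show ?thesis using assms finite_subset by (auto simp: effective_divisors_def)
qed

lemma effective_divisors_support_degree_pos:
  assumes fin: "finite (effective_divisors pl dg n)"
    and D: "D \<in> effective_divisors pl dg n" and P: "D P \<noteq> 0"
  shows "0 < dg P"
proof (rule ccontr)
  assume "\<not> 0 < dg P"
  then have dg_P: "dg P = 0" by simp
  \<comment> \<open>raising \<open>D\<close> at a place of degree 0 keeps the degree\<close>
  define D' where "D' k = D(P := D P + int k)" for k :: nat
  have "0 < D P" using D P by (auto simp: effective_divisors_def order.strict_iff_order)
  then have supp: "{Q. D' k Q \<noteq> 0} = {Q. D Q \<noteq> 0}" for k
    by (auto simp: D'_def)
  have "D' k \<in> effective_divisors pl dg n" for k
  proof (rule mem_effective_divisorsI[where T = "{Q. D Q \<noteq> 0}"])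
    have "(\<Sum>Q\<in>{Q. D Q \<noteq> 0}. D' k Q * int (dg Q)) = (\<Sum>Q\<in>{Q. D Q \<noteq> 0}. D Q * int (dg Q))"
      by (intro sum.cong) (auto simp: D'_def dg_P)
    then show "(\<Sum>Q\<in>{Q. D Q \<noteq> 0}. D' k Q * int (dg Q)) = int n"
      using D by (simp add: effective_divisors_def)
    show "finite {Q. D Q \<noteq> 0}" "{Q. D' k Q \<noteq> 0} \<subseteq> {Q. D Q \<noteq> 0}"
      using D supp by (auto simp: effective_divisors_def)
    show "pl Q" if "D' k Q \<noteq> 0" for Q
      using that D supp by (auto simp: effective_divisors_def)
    show "0 \<le> D' k Q" for Q
      using D by (auto simp: effective_divisors_def D'_def)
  qed
  moreover have "inj D'"
  proof (rule injI)
    fix k l assume "D' k = D' l"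
    then have "D' k P = D' l P" by simp
    then show "k = l" by (simp add: D'_def)
  qed
  ultimately have "finite (range D')"
    by (intro finite_subset[OF _ fin]) blast
  then have "finite (UNIV :: nat set)"
    using \<open>inj D'\<close> by (rule finite_imageD)
  then show False by simp
qed

lemma effective_divisors_finite_degree_class:
  assumes fin: "finite (effective_divisors pl dg n)"
    and D: "D \<in> effective_divisors pl dg n" and P: "D P \<noteq> 0"
  shows "finite {Q. pl Q \<and> dg Q = dg P}"
proof (rule ccontr)
  assume inf: "infinite {Q. pl Q \<and> dg Q = dg P}"
  \<comment> \<open>moving one unit of \<open>D\<close> from \<open>P\<close> to a place of the same degree keeps the degree\<close>
  define D' where "D' P' Q = D Q - of_bool (Q = P) + of_bool (Q = P')" for P' Q
  have D_pos: "0 < D P" and D_nonneg: "\<And>Q. 0 \<le> D Q" and supp: "finite {Q. D Q \<noteq> 0}"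
    and pl_supp: "\<And>Q. D Q \<noteq> 0 \<Longrightarrow> pl Q"
    using D P by (auto simp: effective_divisors_def order.strict_iff_order)
  have "D' P' \<in> effective_divisors pl dg n" if P': "pl P'" "dg P' = dg P" for P'
  proof (rule mem_effective_divisorsI[where T = "insert P' {Q. D Q \<noteq> 0}"])
    have "D' P' Q * int (dg Q) = D Q * int (dg Q) - (if Q = P then int (dg Q) else 0)
        + (if Q = P' then int (dg Q) else 0)" for Q
      by (simp add: D'_def algebra_simps)
    then have "(\<Sum>Q\<in>insert P' {Q. D Q \<noteq> 0}. D' P' Q * int (dg Q))
        = (\<Sum>Q\<in>insert P' {Q. D Q \<noteq> 0}. D Q * int (dg Q)) - int (dg P) + int (dg P')"
      using supp P by (simp add: sum.distrib sum_subtractf sum.delta)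
    also have "\<dots> = int n"
      using effective_divisors_degree[OF D] supp P' by auto
    finally show "(\<Sum>Q\<in>insert P' {Q. D Q \<noteq> 0}. D' P' Q * int (dg Q)) = int n" .
    show "finite (insert P' {Q. D Q \<noteq> 0})" using supp by simp
    show "{Q. D' P' Q \<noteq> 0} \<subseteq> insert P' {Q. D Q \<noteq> 0}"
      using D_pos by (auto simp: D'_def)
    show "pl Q" if "D' P' Q \<noteq> 0" for Q
      using that pl_supp P' D_pos by (cases "Q = P'"; cases "Q = P") (auto simp: D'_def)
    show "0 \<le> D' P' Q" for Q
      using D_nonneg[of Q] D_pos by (auto simp: D'_def)
  qed
  moreover have "inj D'"
  proof (rule injI)
    fix P' P'' assume "D' P' = D' P''"
    then have "D' P' P' = D' P'' P'" by simp
    then show "P' = P''" by (auto simp: D'_def split: if_splits)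
  qed
  ultimately have "finite (D' ` {Q. pl Q \<and> dg Q = dg P})"
    by (intro finite_subset[OF _ fin]) blast
  then have "finite {Q. pl Q \<and> dg Q = dg P}"
    using inj_on_subset[OF \<open>inj D'\<close> subset_UNIV] by (rule finite_imageD)
  then show False using inf by simp
qed

lemma effective_divisors_degree_class_sum_le:
  assumes D: "D \<in> effective_divisors pl dg n" and r: "0 < r"
    and fin: "finite {Q. pl Q \<and> dg Q = r}"
  shows "(\<Sum>Q | pl Q \<and> dg Q = r. nat (D Q)) \<le> n div r"
proof -
  let ?C = "{Q. pl Q \<and> dg Q = r}" and ?S = "{Q. D Q \<noteq> 0}"
  have nonneg: "\<And>Q. 0 \<le> D Q" and supp: "finite ?S"
    using D by (auto simp: effective_divisors_def)
  have "int (\<Sum>Q\<in>?C. nat (D Q)) * int r = (\<Sum>Q\<in>?C. D Q * int (dg Q))"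
    unfolding of_nat_sum sum_distrib_right by (intro sum.cong) (simp_all add: nonneg)
  also have "\<dots> \<le> (\<Sum>Q\<in>?C \<union> ?S. D Q * int (dg Q))"
    using fin supp nonneg by (intro sum_mono2) auto
  also have "\<dots> = int n"
    using effective_divisors_degree[OF D] fin supp by auto
  finally have "(\<Sum>Q\<in>?C. nat (D Q)) * r \<le> n"
    by (simp only: of_nat_mult[symmetric] of_nat_le_iff)
  then show ?thesis
    using r by (simp add: less_eq_div_iff_mult_less_eq)
qed

definition support_degrees :: "('b \<Rightarrow> bool) \<Rightarrow> ('b \<Rightarrow> nat) \<Rightarrow> nat \<Rightarrow> nat set" where
  "support_degrees pl dg N = {r. 1 \<le> r \<and> r \<le> N \<and> card {P. pl P \<and> dg P = r} \<ge> 1}"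

lemma effective_divisors_support_degree:
  assumes fin: "finite (effective_divisors pl dg n)"
    and D: "D \<in> effective_divisors pl dg n" and "n \<le> N" and P: "D P \<noteq> 0"
  shows "dg P \<in> support_degrees pl dg N"
proof -
  have pl_P: "pl P" and "0 < D P"
    using D P by (auto simp: effective_divisors_def order.strict_iff_order)
  have r: "0 < dg P" by (rule effective_divisors_support_degree_pos[OF fin D P])
  have C: "finite {Q. pl Q \<and> dg Q = dg P}"
    by (rule effective_divisors_finite_degree_class[OF fin D P])
  have "1 \<le> nat (D P)"
    using \<open>0 < D P\<close> by simp
  also have "\<dots> \<le> (\<Sum>Q | pl Q \<and> dg Q = dg P. nat (D Q))"
    using C pl_P by (intro member_le_sum) auto
  also have "\<dots> \<le> n div dg P"
    by (rule effective_divisors_degree_class_sum_le[OF D r C])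
  finally have "dg P \<le> n"
    by (simp add: Suc_le_eq div_greater_zero_iff)
  moreover have "card {Q. pl Q \<and> dg Q = dg P} \<ge> 1"
    using C pl_P by (auto simp: Suc_le_eq card_gt_0_iff)
  ultimately show ?thesis
    using r \<open>n \<le> N\<close> by (simp add: support_degrees_def)
qed

definition degree_components ::
    "('b \<Rightarrow> bool) \<Rightarrow> ('b \<Rightarrow> nat) \<Rightarrow> nat set \<Rightarrow> ('b \<Rightarrow> int) \<Rightarrow> nat \<Rightarrow> 'b \<Rightarrow> nat" where
  "degree_components pl dg R D = (\<lambda>r\<in>R. \<lambda>P. if pl P \<and> dg P = r then nat (D P) else 0)"

lemma degree_components_mem_PiE:
  assumes D: "D \<in> effective_divisors pl dg n" and "n \<le> N"
  shows "degree_components pl dg (support_degrees pl dg N) D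
    \<in> (\<Pi>\<^sub>E r\<in>support_degrees pl dg N. bounded_sum_functions {P. pl P \<and> dg P = r} (N div r))"
proof (rule PiE_I)
  fix r assume r: "r \<in> support_degrees pl dg N"
  then have "0 < r" and fin: "finite {P. pl P \<and> dg P = r}"
    by (auto simp: support_degrees_def intro: card_ge_0_finite)
  have "(\<Sum>P | pl P \<and> dg P = r. degree_components pl dg (support_degrees pl dg N) D r P)
      = (\<Sum>P | pl P \<and> dg P = r. nat (D P))"
    using r by (simp add: degree_components_def)
  also have "\<dots> \<le> n div r"
    by (rule effective_divisors_degree_class_sum_le[OF D \<open>0 < r\<close> fin])
  also have "\<dots> \<le> N div r"
    using \<open>n \<le> N\<close> by (rule div_le_mono)
  finally show "degree_components pl dg (support_degrees pl dg N) D r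
      \<in> bounded_sum_functions {P. pl P \<and> dg P = r} (N div r)"
    using r by (simp add: degree_components_def bounded_sum_functions_def)
qed (simp add: degree_components_def)

lemma inj_on_degree_components:
  "inj_on (degree_components pl dg (support_degrees pl dg N))
     (\<Union>n\<in>{n. n \<le> N \<and> finite (effective_divisors pl dg n)}. effective_divisors pl dg n)"
proof (rule inj_on_inverseI)
  let ?R = "support_degrees pl dg N"
  fix D assume "D \<in> (\<Union>n\<in>{n. n \<le> N \<and> finite (effective_divisors pl dg n)}. effective_divisors pl dg n)"
  then obtain n where n: "n \<le> N" "finite (effective_divisors pl dg n)"
    and D: "D \<in> effective_divisors pl dg n"
    by blast
  show "(\<lambda>P. if pl P \<and> dg P \<in> ?R then int (degree_components pl dg ?R D (dg P) P) else 0) = D"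
  proof
    fix P
    show "(if pl P \<and> dg P \<in> ?R then int (degree_components pl dg ?R D (dg P) P) else 0) = D P"
    proof (cases "D P = 0")
      case False
      then have "pl P" "0 \<le> D P"
        using D by (auto simp: effective_divisors_def)
      then show ?thesis
        using effective_divisors_support_degree[OF n(2) D n(1) False]
        by (simp add: degree_components_def)
    qed (simp add: degree_components_def)
  qed
qed

lemma sum_card_effective_divisors_le:
  "(\<Sum>n\<le>N. card (effective_divisors pl dg n))
     \<le> (\<Prod>r\<in>support_degrees pl dg N. (card {P. pl P \<and> dg P = r} + N div r) choose (N div r))"
proof -
  define R where "R = support_degrees pl dg N"
  define I where "I = {n. n \<le> N \<and> finite (effective_divisors pl dg n)}"
  have fin_R: "finite R"
    by (rule finite_subset[of _ "{..N}"]) (auto simp: R_def support_degrees_def)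
  have fin_C: "finite {P. pl P \<and> dg P = r}" if "r \<in> R" for r
    using that by (auto simp: R_def support_degrees_def intro: card_ge_0_finite)
  have "(\<Sum>n\<le>N. card (effective_divisors pl dg n)) = (\<Sum>n\<in>I. card (effective_divisors pl dg n))"
    by (rule sum.mono_neutral_right) (auto simp: I_def)
  also have "\<dots> = card (\<Union>n\<in>I. effective_divisors pl dg n)"
  proof (rule card_UN_disjoint[symmetric])
    show "finite I"
      by (rule finite_subset[of _ "{..N}"]) (auto simp: I_def)
  qed (auto simp: I_def effective_divisors_def)
  also have "\<dots> \<le> card (\<Pi>\<^sub>E r\<in>R. bounded_sum_functions {P. pl P \<and> dg P = r} (N div r))"
  proof (rule card_inj_on_le)
    show "inj_on (degree_components pl dg R) (\<Union>n\<in>I. effective_divisors pl dg n)"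
      unfolding R_def I_def by (rule inj_on_degree_components)
    show "degree_components pl dg R ` (\<Union>n\<in>I. effective_divisors pl dg n)
        \<subseteq> (\<Pi>\<^sub>E r\<in>R. bounded_sum_functions {P. pl P \<and> dg P = r} (N div r))"
      unfolding R_def I_def using degree_components_mem_PiE by blast
    show "finite (\<Pi>\<^sub>E r\<in>R. bounded_sum_functions {P. pl P \<and> dg P = r} (N div r))"
      using fin_R fin_C by (intro finite_PiE finite_bounded_sum_functions)
  qed
  also have "\<dots> = (\<Prod>r\<in>R. card (bounded_sum_functions {P. pl P \<and> dg P = r} (N div r)))"
    using fin_R by (rule card_PiE)
  also have "\<dots> = (\<Prod>r\<in>R. (card {P. pl P \<and> dg P = r} + N div r) choose (N div r))"
    using fin_C by (intro prod.cong) (simp_all add: card_bounded_sum_functions)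
  finally show ?thesis
    by (simp add: R_def)
qed

lemma effective_divisors_of_degree_eq:
  "{D. is_divisor K D \<and> effective D \<and> deg_div K D = int n}
     = effective_divisors (place K) (deg_place K) n"
  by (auto simp: is_divisor_def effective_def deg_div_def effective_divisors_def)

theorem theorem3p6:
  fixes K :: "'a::field set" and q g :: nat
  assumes "function_field K" and "full_constant_field K"
    and "finite K" and "card K = q"
    and "genus K = int g" and "g \<ge> 2"
  shows "(\<Sum>n\<le>g - 1. num_eff_divisors K n)
     \<le> (\<Prod>r\<in>{r. 1 \<le> r \<and> r \<le> g - 1 \<and> num_places K r \<ge> 1}.
          (num_places K r + (g - 1) div r) choose ((g - 1) div r))"
  using sum_card_effective_divisors_le[of "place K" "deg_place K" "g - 1"]
  by (simp add: num_eff_divisors_def num_places_def effective_divisors_of_degree_eq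
      support_degrees_def)

end
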